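(* Let $T\in V$ be a target variable. If $\zeta_T=n$ (i.e. $T\in\Upsilon_i$ for all $i$) and the family $\{\Upsilon_1\setminus\{T\},\dots,\Upsilon_n\setminus\{T\}\}$ is conservative, then $\bigcup_{i=1}^{n}MB_i(T)=ch(T)\cup sp(T)$.
   Context: Let $G=(V,E)$ be a DAG (causal Bayesian network) over a finite set $V$ of random variables with joint distribution $P$ satisfying the Markov condition with respect to $G$; causal sufficiency is assumed. For $X\in V$, $pa(X)$ and $ch(X)$ are the parents and children of $X$ in $G$, $sp(X)=\big(\bigcup_{Y\in ch(X)}pa(Y)\big)\setminus\{X\}$ is the set of spouses, and $MB(X)=pa(X)\cup ch(X)\cup sp(X)$ is the Markov blanket. There are $n\ge 1$ intervention experiments; in the $i$-th, the set $\Upsilon_i\subseteq V$ is manipulated. The post-intervention DAG is $G_i=(V,E_i)$ with $E_i=\{(a,b)\in E: b\notin\Upsilon_i\}$, with distribution $P_i(V)=\prod_{V_j\notin\Upsilon_i}P(V_j\mid pa(V_j))\prod_{V_j\in\Upsilon_i}P_i(V_j)$, and $D_i$ is a dataset drawn from $P_i$. It is assumed that each $P_i$ is faithful to $G_i$ and that conditional independence tests on $D_i$ are reliable (return exactly the conditional independences of $P_i$). $MB_i(T)$ denotes the Markov blanket of $T$ found in $D_i$, i.e. the set of parents, children and spouses of $T$ in $G_i$. $\zeta_T=|\{i:T\in\Upsilon_i\}|$. A family $\{A_1,\dots,A_n\}$ of subsets of $V$ is called conservative if for every $V_j\in\bigcup_{i=1}^n A_i$ there exists $i$ with $V_j\notin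 A_i$. *)

theory Defs
  imports Main
begin

definition is_dag :: "'v set \<Rightarrow> ('v \<times> 'v) set \<Rightarrow> bool" where
  "is_dag V E \<longleftrightarrow> finite V \<and> E \<subseteq> V \<times> V \<and> acyclic E"

definition pa :: "('v \<times> 'v) set \<Rightarrow> 'v \<Rightarrow> 'v set" where
  "pa E X = {a. (a, X) \<in> E}"

definition ch :: "('v \<times> 'v) set \<Rightarrow> 'v \<Rightarrow> 'v set" where
  "ch E X = {b. (X, b) \<in> E}"

definition sp :: "('v \<times> 'v) set \<Rightarrow> 'v \<Rightarrow> 'v set" where
  "sp E X = (\<Union>Y\<in>ch E X. pa E Y) - {X}"

definition MB :: "('v \<times> 'v) set \<Rightarrow> 'v \<Rightarrow> 'v set" where
  "MB E X = pa E X \<union> ch E X \<union> sp E X"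

definition intervene :: "('v \<times> 'v) set \<Rightarrow> 'v set \<Rightarrow> ('v \<times> 'v) set" where
  "intervene E U = {(a, b) \<in> E. b \<notin> U}"

definition MB_i :: "('v \<times> 'v) set \<Rightarrow> (nat \<Rightarrow> 'v set) \<Rightarrow> nat \<Rightarrow> 'v \<Rightarrow> 'v set" where
  "MB_i E Ups i T = MB (intervene E (Ups i)) T"

definition zeta :: "nat \<Rightarrow> (nat \<Rightarrow> 'v set) \<Rightarrow> 'v \<Rightarrow> nat" where
  "zeta n Ups T = card {i \<in> {1..n}. T \<in> Ups i}"

definition conservative :: "nat \<Rightarrow> (nat \<Rightarrow> 'v set) \<Rightarrow> bool" where
  "conservative n A \<longleftrightarrow> (\<forall>v \<in> (\<Union>i\<in>{1..n}. A i). \<exists>i\<in>{1..n}. v \<notin> A i)"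

end

theory Submission
  imports Defs
begin

text \<open>Manipulating T cuts its parents off, so every experiment sees only children and
spouses of T. Conversely a child Y of T (Y differs from T by acyclicity) keeps all its
incoming edges in any experiment leaving Y unmanipulated, and conservativeness provides
such an experiment for Y: so the children and spouses reached through Y are recovered
in some experiment.\<close>

lemma zeta_eq_iff:
  "zeta n Ups T = n \<longleftrightarrow> (\<forall>i\<in>{1..n}. T \<in> Ups i)"
proof -
  have "card {i \<in> {1..n}. T \<in> Ups i} = card {1..n} \<longleftrightarrow> {i \<in> {1..n}. T \<in> Ups i} = {1..n}"
    by (intro iffI card_subset_eq) auto
  then show ?thesis
    unfolding zeta_def by (simp only: card_atLeastAtMost diff_Suc_1) blast
qed

lemma conservative_exists_notin:
  assumes "conservative n (\<lambda>i. Ups i - {T})" and "n \<ge> 1" and "Y \<noteq> T"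
  shows "\<exists>i\<in>{1..n}. Y \<notin> Ups i"
proof (cases "\<exists>i\<in>{1..n}. Y \<in> Ups i - {T}")
  case True
  then show ?thesis
    using assms(1) unfolding conservative_def by blast
next
  case False
  moreover have "1 \<in> {1..n}" using assms(2) by simp
  ultimately show ?thesis using assms(3) by blast
qed

lemma is_dag_irrefl: "is_dag V E \<Longrightarrow> (x, x) \<notin> E"
  unfolding is_dag_def acyclic_def by (meson r_into_trancl')

lemma MB_intervene_subset:
  "T \<in> U \<Longrightarrow> MB (intervene E U) T \<subseteq> ch E T \<union> sp E T"
  unfolding MB_def pa_def ch_def sp_def intervene_def by blast

lemma ch_sp_through_unmanipulated_child:
  assumes "Y \<in> ch E T" and "Y \<notin> U"
  shows "insert Y (pa E Y - {T}) \<subseteq> MB (intervene E U) T"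
  using assms unfolding MB_def pa_def ch_def sp_def intervene_def by blast

lemma ch_sp_eq_Union_ch_pa:
  assumes "\<And>x. (x, x) \<notin> E"
  shows "ch E T \<union> sp E T = (\<Union>Y\<in>ch E T. insert Y (pa E Y - {T}))"
  using assms unfolding ch_def sp_def pa_def by blast

theorem theorem8:
  fixes V :: "'v set" and E :: "('v \<times> 'v) set" and n :: nat
    and Ups :: "nat \<Rightarrow> 'v set" and T :: 'v
  assumes "is_dag V E"
    and "n \<ge> 1"
    and "\<forall>i\<in>{1..n}. Ups i \<subseteq> V"
    and "T \<in> V"
    and "zeta n Ups T = n"
    and "conservative n (\<lambda>i. Ups i - {T})"
  shows "(\<Union>i\<in>{1..n}. MB_i E Ups i T) = ch E T \<union> sp E T"
proof
  have "\<forall>i\<in>{1..n}. T \<in> Ups i"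
    using assms(5) by (simp only: zeta_eq_iff)
  then show "(\<Union>i\<in>{1..n}. MB_i E Ups i T) \<subseteq> ch E T \<union> sp E T"
    unfolding MB_i_def by (intro UN_least MB_intervene_subset) blast
next
  have "insert Y (pa E Y - {T}) \<subseteq> (\<Union>i\<in>{1..n}. MB_i E Ups i T)" if "Y \<in> ch E T" for Y
  proof -
    have "Y \<noteq> T"
      using that is_dag_irrefl[OF assms(1)] unfolding ch_def by blast
    then obtain i where "i \<in> {1..n}" "Y \<notin> Ups i"
      using conservative_exists_notin[OF assms(6,2)] by blast
    then show ?thesis
      unfolding MB_i_def using ch_sp_through_unmanipulated_child[OF that, of "Ups i"] by blast
  qed
  then show "ch E T \<union> sp E T \<subseteq> (\<Union>i\<in>{1..n}. MB_i E Ups i T)"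
    unfolding ch_sp_eq_Union_ch_pa[OF is_dag_irrefl[OF assms(1)]] by (rule UN_least)
qed

end
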